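(* Let $\mathcal{J}\in\{\mathcal{F},\mathcal{I},\mathcal{I}_1,\mathcal{C},\mathcal{C}_v\}$. If $M\in\mathcal{J}$ then $M\cup\{2\}\in\mathcal{J}$.
   Context: For a summable sequence $\mathbf{x}=(x_n)$ of positive reals (finite sequences are allowed and are identified with eventually-zero sequences), the achievement set is $\mathcal{A}(\mathbf{x})=\{\sum_{n\in A}x_n : A\subseteq\mathbb{N}\}$. The cardinal function $f_{\mathbf{x}}:\mathcal{A}(\mathbf{x})\to\{1,2,3,\dots\}\cup\{\omega,\mathfrak{c}\}$ sends $x$ to the number (cardinality) of $0$–$1$ sequences $(\varepsilon_n)$, indexed by the nonzero terms, with $\sum\varepsilon_n x_n=x$. Families of sets: $\mathcal{F}$ = ranges of cardinal functions of finite sequences; $\mathcal{I}$ = ranges of cardinal functions of sequences whose achievement set is a finite union of (nondegenerate) closed intervals; $\mathcal{I}_1$ = ranges of cardinal functions of sequences whose achievement set is a single closed interval; $\mathcal{C}$ = ranges for sequences whose achievement set is a Cantor set; $\mathcal{C}_v$ = ranges for sequences whose achievement set is a Cantorval (a nonempty compact subset of $\mathbb{R}$ equal to the closure of its interior such that both endpoints of every nontrivial connected component are accumulation points of one-point components). *)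

theory Defs
  imports "HOL-Analysis.Analysis"
begin

text \<open>Admissible sequences: summable sequences of positive reals; a finite sequence
  of positive reals is identified with an eventually-zero sequence whose nonzero
  terms form an initial segment.\<close>
definition pos_seq :: "(nat \<Rightarrow> real) \<Rightarrow> bool" where
  "pos_seq x \<longleftrightarrow> summable x \<and>
     ((\<forall>n. x n > 0) \<or> (\<exists>N. \<forall>n. (n < N \<longrightarrow> x n > 0) \<and> (N \<le> n \<longrightarrow> x n = 0)))"

definition finite_seq :: "(nat \<Rightarrow> real) \<Rightarrow> bool" where
  "finite_seq x \<longleftrightarrow> pos_seq x \<and> finite {n. x n \<noteq> 0}"

definition subsum :: "(nat \<Rightarrow> real) \<Rightarrow> nat set \<Rightarrow> real" where
  "subsum x A = (\<Sum>n. if n \<in> A then x n else 0)"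

definition achievement_set :: "(nat \<Rightarrow> real) \<Rightarrow> real set" where
  "achievement_set x = {subsum x A | A. A \<subseteq> UNIV}"

text \<open>0-1 sequences indexed by the nonzero terms correspond to subsets of the
  set of indices of nonzero terms.\<close>
definition representations :: "(nat \<Rightarrow> real) \<Rightarrow> real \<Rightarrow> nat set set" where
  "representations x t = {A. A \<subseteq> {n. x n \<noteq> 0} \<and> subsum x A = t}"

datatype cardval = Fin nat | Omega | Contin

definition cardval_of :: "'a set \<Rightarrow> cardval" where
  "cardval_of S = (if finite S then Fin (card S) else if countable S then Omega else Contin)"

definition cardinal_function :: "(nat \<Rightarrow> real) \<Rightarrow> real \<Rightarrow> cardval" where
  "cardinal_function x t = cardval_of (representations x t)"

definition cf_range :: "(nat \<Rightarrow> real) \<Rightarrow> cardval set" where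
  "cf_range x = cardinal_function x ` achievement_set x"

definition finite_union_intervals :: "real set \<Rightarrow> bool" where
  "finite_union_intervals S \<longleftrightarrow>
     (\<exists>(n::nat) a b. (\<forall>i<n. a i < b i) \<and> S = (\<Union>i<n. {a i..b i}))"

definition single_interval :: "real set \<Rightarrow> bool" where
  "single_interval S \<longleftrightarrow> (\<exists>a b. a < b \<and> S = {a..b})"

definition cantor_set :: "real set \<Rightarrow> bool" where
  "cantor_set S \<longleftrightarrow> S \<noteq> {} \<and> compact S \<and> (\<forall>y\<in>S. y islimpt S) \<and>
     (\<forall>y\<in>S. connected_component_set S y = {y})"

definition cantorval :: "real set \<Rightarrow> bool" where
  "cantorval S \<longleftrightarrow> S \<noteq> {} \<and> compact S \<and> closure (interior S) = S \<and>
     (\<forall>y\<in>S. let C = connected_component_set S y in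
        (\<exists>z\<in>C. z \<noteq> y) \<longrightarrow>
          (Inf C) islimpt {p\<in>S. connected_component_set S p = {p}} \<and>
          (Sup C) islimpt {p\<in>S. connected_component_set S p = {p}})"

definition fam_F :: "cardval set set" where
  "fam_F = {cf_range x | x. finite_seq x}"

definition fam_I :: "cardval set set" where
  "fam_I = {cf_range x | x. pos_seq x \<and> finite_union_intervals (achievement_set x)}"

definition fam_I1 :: "cardval set set" where
  "fam_I1 = {cf_range x | x. pos_seq x \<and> single_interval (achievement_set x)}"

definition fam_C :: "cardval set set" where
  "fam_C = {cf_range x | x. pos_seq x \<and> cantor_set (achievement_set x)}"

definition fam_Cv :: "cardval set set" where
  "fam_Cv = {cf_range x | x. pos_seq x \<and> cantorval (achievement_set x)}"

end

theory Submission
  imports Defs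
begin

text \<open>Let \<open>x\<close> have positive first term and sum \<open>s\<close>, and let \<open>A \<subseteq> [0, s]\<close> be its achievement
  set. The sequence \<open>(s, x\<^sub>0, x\<^sub>1, \<dots>)\<close> has achievement set \<open>A \<union> (s + A)\<close>, and the two copies
  meet only in \<open>s\<close>. A point \<open>t < s\<close> is represented exactly as \<open>t\<close> was, a point \<open>s + u\<close> with
  \<open>u > 0\<close> exactly as \<open>u\<close> was (with the new term added), and \<open>s\<close> itself in exactly two ways: by
  the new term alone or by all old terms. So the range of the cardinal function gains exactly
  the value 2. Gluing \<open>A\<close> and \<open>s + A\<close> at their common endpoint keeps an interval an interval, a
  finite union of intervals such a union, and a Cantor set or Cantorval of the same kind; for
  Cantorvals because an extreme point of a Cantorval is a one-point component. The zero
  sequence, for which prepending changes nothing, only belongs to the finite family, where it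
  is replaced by the one-term sequence \<open>(1)\<close> with the same range \<open>{1}\<close>.\<close>

section \<open>Subsums\<close>

lemma pos_seq_nonneg: "pos_seq x \<Longrightarrow> 0 \<le> x n"
  unfolding pos_seq_def by (metis less_eq_real_def linorder_not_le)

lemma pos_seq_eq_0: "pos_seq x \<Longrightarrow> x 0 \<le> 0 \<Longrightarrow> x n = 0"
  unfolding pos_seq_def by (metis gr0I le0 linorder_not_le)

lemma summable_restrict:
  "pos_seq x \<Longrightarrow> summable (\<lambda>n. if n \<in> A then x n else 0)"
  by (rule summable_comparison_test'[of x]) (auto simp: pos_seq_nonneg pos_seq_def)

lemma subsum_nonneg: "pos_seq x \<Longrightarrow> 0 \<le> subsum x A"
  unfolding subsum_def by (rule suminf_nonneg[OF summable_restrict]) (auto simp: pos_seq_nonneg)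

lemma subsum_add_subsum_Compl: "pos_seq x \<Longrightarrow> subsum x A + subsum x (- A) = suminf x"
  unfolding subsum_def
  by (subst suminf_add[OF summable_restrict summable_restrict]) (auto intro!: arg_cong[where f = suminf])

lemma subsum_le_suminf: "pos_seq x \<Longrightarrow> subsum x A \<le> suminf x"
  using subsum_add_subsum_Compl[of x A] subsum_nonneg[of x "- A"] by linarith

lemma term_le_subsum: "pos_seq x \<Longrightarrow> n \<in> A \<Longrightarrow> x n \<le> subsum x A"
  using sum_le_suminf[OF summable_restrict, of x "{n}" A] by (simp add: subsum_def pos_seq_nonneg)

lemma subsum_empty [simp]: "subsum x {} = 0"
  unfolding subsum_def by simp

lemma subsum_support: "subsum x {n. x n \<noteq> 0} = suminf x"
  unfolding subsum_def by (rule arg_cong[where f = suminf]) auto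

lemma pos_seq_suminf_pos: "pos_seq x \<Longrightarrow> 0 < x 0 \<Longrightarrow> 0 < suminf x"
  using term_le_subsum[of x 0 UNIV] subsum_le_suminf[of x UNIV] by simp

lemma achievement_set_eq_range: "achievement_set x = range (subsum x)"
  unfolding achievement_set_def by auto

lemma achievement_set_subset: "pos_seq x \<Longrightarrow> achievement_set x \<subseteq> {0..suminf x}"
  unfolding achievement_set_eq_range using subsum_nonneg subsum_le_suminf by auto

lemma zero_in_achievement_set: "0 \<in> achievement_set x"
  unfolding achievement_set_eq_range by (metis rangeI subsum_empty)

lemma suminf_in_achievement_set: "suminf x \<in> achievement_set x"
  unfolding achievement_set_eq_range by (metis rangeI subsum_support)

lemma representations_eq_empty:
  "pos_seq x \<Longrightarrow> t \<notin> {0..suminf x} \<Longrightarrow> representations x t = {}"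
proof -
  assume "pos_seq x" "t \<notin> {0..suminf x}"
  then have "subsum x A \<noteq> t" for A
    using subsum_nonneg[of x A] subsum_le_suminf[of x A] by auto
  then show ?thesis unfolding representations_def by blast
qed

lemma representations_0: "pos_seq x \<Longrightarrow> representations x 0 = {{}}"
proof -
  assume x: "pos_seq x"
  have "representations x 0 \<subseteq> {{}}"
  proof
    fix B assume B: "B \<in> representations x 0"
    have "x n = 0" if "n \<in> B" for n
      using B term_le_subsum[OF x that] pos_seq_nonneg[OF x, of n] unfolding representations_def by simp
    with B show "B \<in> {{}}" unfolding representations_def by auto
  qed
  moreover have "{} \<in> representations x 0"
    unfolding representations_def by simp
  ultimately show ?thesis by (metis empty_iff subset_singleton_iff)
qed

lemma representations_suminf:
  "pos_seq x \<Longrightarrow> representations x (suminf x) = {{n. x n \<noteq> 0}}"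
proof -
  assume x: "pos_seq x"
  have "representations x (suminf x) \<subseteq> {{n. x n \<noteq> 0}}"
  proof
    fix B assume B: "B \<in> representations x (suminf x)"
    have "subsum x (- B) = 0"
      using B subsum_add_subsum_Compl[OF x, of B] unfolding representations_def by simp
    then have "x n = 0" if "n \<notin> B" for n
      using term_le_subsum[OF x, of n "- B"] pos_seq_nonneg[OF x, of n] that by simp
    with B show "B \<in> {{n. x n \<noteq> 0}}" unfolding representations_def by auto
  qed
  moreover have "{n. x n \<noteq> 0} \<in> representations x (suminf x)"
    unfolding representations_def by (simp add: subsum_support)
  ultimately show ?thesis by (metis empty_iff subset_singleton_iff)
qed

lemma cardval_of_image: "inj_on f S \<Longrightarrow> cardval_of (f ` S) = cardval_of S"
proof -
  assume f: "inj_on f S"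
  then have "countable (f ` S) \<longleftrightarrow> countable S"
    using countable_image countable_image_inj_on by blast
  with f show ?thesis unfolding cardval_of_def by (simp add: finite_image_iff card_image)
qed

lemma cardinal_function_0: "pos_seq x \<Longrightarrow> cardinal_function x 0 = Fin 1"
  unfolding cardinal_function_def cardval_of_def by (simp add: representations_0)

lemma cardinal_function_suminf: "pos_seq x \<Longrightarrow> cardinal_function x (suminf x) = Fin 1"
  unfolding cardinal_function_def cardval_of_def by (simp add: representations_suminf)

section \<open>Prepending the total sum\<close>

definition prepend_sum :: "(nat \<Rightarrow> real) \<Rightarrow> nat \<Rightarrow> real" where
  "prepend_sum x n = (case n of 0 \<Rightarrow> suminf x | Suc m \<Rightarrow> x m)"

lemma prepend_sum_0 [simp]: "prepend_sum x 0 = suminf x"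
  by (simp add: prepend_sum_def)

lemma prepend_sum_Suc [simp]: "prepend_sum x (Suc n) = x n"
  by (simp add: prepend_sum_def)

lemma pos_seq_prepend_sum:
  assumes x: "pos_seq x" and x0: "0 < x 0"
  shows "pos_seq (prepend_sum x)"
proof -
  have summable: "summable (prepend_sum x)"
    using x summable_Suc_iff[of "prepend_sum x"] by (simp add: pos_seq_def)
  have pos: "0 < prepend_sum x 0" using pos_seq_suminf_pos[OF x x0] by simp
  from x consider "\<forall>n. 0 < x n" | N where "\<forall>n. (n < N \<longrightarrow> 0 < x n) \<and> (N \<le> n \<longrightarrow> x n = 0)"
    unfolding pos_seq_def by blast
  then show ?thesis
  proof cases
    case 1
    then have "\<forall>n. 0 < prepend_sum x n" using pos by (simp add: prepend_sum_def split: nat.split)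
    with summable show ?thesis unfolding pos_seq_def by blast
  next
    case (2 N)
    then have "\<forall>n. (n < Suc N \<longrightarrow> 0 < prepend_sum x n) \<and> (Suc N \<le> n \<longrightarrow> prepend_sum x n = 0)"
      using pos by (auto simp: prepend_sum_def split: nat.split)
    with summable show ?thesis unfolding pos_seq_def by blast
  qed
qed

lemma support_prepend_sum:
  assumes "0 < suminf x"
  shows "{n. prepend_sum x n \<noteq> 0} = insert 0 (Suc ` {n. x n \<noteq> 0})"
proof -
  have "prepend_sum x n \<noteq> 0 \<longleftrightarrow> n \<in> insert 0 (Suc ` {n. x n \<noteq> 0})" for n
    using assms by (cases n) auto
  then show ?thesis by blast
qed

lemma subsum_prepend_sum:
  assumes x: "pos_seq x"
  shows "subsum (prepend_sum x) A = (if 0 \<in> A then suminf x else 0) + subsum x {n. Suc n \<in> A}"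
proof -
  have "summable (\<lambda>n. if Suc n \<in> A then prepend_sum x (Suc n) else 0)"
    using summable_restrict[OF x, of "{n. Suc n \<in> A}"] by (simp cong: if_cong)
  then have "summable (\<lambda>n. if n \<in> A then prepend_sum x n else 0)"
    by (rule summable_Suc_iff[THEN iffD1])
  from suminf_split_head[OF this] show ?thesis unfolding subsum_def by (simp cong: if_cong)
qed

lemma subsum_prepend_sum_image_Suc:
  "pos_seq x \<Longrightarrow> subsum (prepend_sum x) (Suc ` B) = subsum x B"
  by (simp add: subsum_prepend_sum image_iff)

lemma subsum_prepend_sum_insert_0:
  "pos_seq x \<Longrightarrow> subsum (prepend_sum x) (insert 0 (Suc ` B)) = suminf x + subsum x B"
  by (simp add: subsum_prepend_sum image_iff)

lemma nat_set_eq_image_Suc: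
  "A = (if (0::nat) \<in> A then insert 0 (Suc ` {n. Suc n \<in> A}) else Suc ` {n. Suc n \<in> A})"
  by (auto simp: image_iff) (metis not0_implies_Suc)+

lemma achievement_set_prepend_sum:
  assumes x: "pos_seq x"
  shows "achievement_set (prepend_sum x) = achievement_set x \<union> (+) (suminf x) ` achievement_set x"
  unfolding achievement_set_eq_range
proof (intro equalityI subsetI)
  fix t assume "t \<in> range (subsum (prepend_sum x))"
  then show "t \<in> range (subsum x) \<union> (+) (suminf x) ` range (subsum x)"
    by (auto simp: subsum_prepend_sum[OF x])
next
  fix t assume "t \<in> range (subsum x) \<union> (+) (suminf x) ` range (subsum x)"
  then obtain B where "t = subsum x B \<or> t = suminf x + subsum x B" by blast
  then show "t \<in> range (subsum (prepend_sum x))"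
    by (metis rangeI subsum_prepend_sum_image_Suc[OF x] subsum_prepend_sum_insert_0[OF x])
qed

lemma image_Suc_in_representations_prepend_sum:
  "pos_seq x \<Longrightarrow> Suc ` B \<in> representations (prepend_sum x) t \<longleftrightarrow> B \<in> representations x t"
  by (auto simp: representations_def subsum_prepend_sum_image_Suc)

lemma insert_0_in_representations_prepend_sum:
  "pos_seq x \<Longrightarrow> 0 < suminf x \<Longrightarrow>
    insert 0 (Suc ` B) \<in> representations (prepend_sum x) t \<longleftrightarrow> B \<in> representations x (t - suminf x)"
  by (auto simp: representations_def subsum_prepend_sum_insert_0)

lemma representations_prepend_sum:
  assumes x: "pos_seq x" and s: "0 < suminf x"
  shows "representations (prepend_sum x) t =
    image Suc ` representations x t \<union> (\<lambda>B. insert 0 (Suc ` B)) ` representations x (t - suminf x)"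
proof (intro equalityI subsetI)
  fix A assume A: "A \<in> representations (prepend_sum x) t"
  define B where "B = {n. Suc n \<in> A}"
  show "A \<in> image Suc ` representations x t \<union> (\<lambda>B. insert 0 (Suc ` B)) ` representations x (t - suminf x)"
  proof (cases "0 \<in> A")
    case True
    then have "A = insert 0 (Suc ` B)" using nat_set_eq_image_Suc[of A] by (simp add: B_def)
    with A show ?thesis using insert_0_in_representations_prepend_sum[OF x s] by auto
  next
    case False
    then have "A = Suc ` B" using nat_set_eq_image_Suc[of A] by (simp add: B_def)
    with A show ?thesis using image_Suc_in_representations_prepend_sum[OF x] by auto
  qed
next
  fix A
  assume "A \<in> image Suc ` representations x t \<union> (\<lambda>B. insert 0 (Suc ` B)) ` representations x (t - suminf x)"
  then show "A \<in> representations (prepend_sum x) t"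
    using image_Suc_in_representations_prepend_sum[OF x] insert_0_in_representations_prepend_sum[OF x s]
    by auto
qed

lemma inj_on_image_Suc: "inj_on (image Suc) S"
  by (rule inj_on_image) simp

lemma inj_on_insert_0_image_Suc: "inj_on (\<lambda>B. insert 0 (Suc ` B)) S"
proof (rule inj_onI)
  fix A B :: "nat set"
  assume "insert 0 (Suc ` A) = insert 0 (Suc ` B)"
  then have "insert 0 (Suc ` A) - {0} = insert 0 (Suc ` B) - {0}" by simp
  then have "Suc ` A = Suc ` B" by auto
  then show "A = B" by (simp add: inj_image_eq_iff)
qed

lemma cardinal_function_prepend_sum_less:
  assumes x: "pos_seq x" and s: "0 < suminf x" and t: "t < suminf x"
  shows "cardinal_function (prepend_sum x) t = cardinal_function x t"
proof -
  have "representations x (t - suminf x) = {}" using representations_eq_empty[OF x] t by simp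
  then show ?thesis
    unfolding cardinal_function_def representations_prepend_sum[OF x s]
    by (simp add: cardval_of_image[OF inj_on_image_Suc])
qed

lemma cardinal_function_prepend_sum_greater:
  assumes x: "pos_seq x" and s: "0 < suminf x" and u: "0 < u"
  shows "cardinal_function (prepend_sum x) (suminf x + u) = cardinal_function x u"
proof -
  have "representations x (suminf x + u) = {}" using representations_eq_empty[OF x] u by simp
  then show ?thesis
    unfolding cardinal_function_def representations_prepend_sum[OF x s]
    by (simp add: cardval_of_image[OF inj_on_insert_0_image_Suc])
qed

lemma cardinal_function_prepend_sum_suminf:
  assumes x: "pos_seq x" and s: "0 < suminf x"
  shows "cardinal_function (prepend_sum x) (suminf x) = Fin 2"
proof -
  have "representations (prepend_sum x) (suminf x) = {{0}, Suc ` {n. x n \<noteq> 0}}"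
    unfolding representations_prepend_sum[OF x s] by (simp add: representations_0[OF x] representations_suminf[OF x])
  moreover have "Suc ` {n. x n \<noteq> 0} \<noteq> {0}" by auto
  ultimately show ?thesis unfolding cardinal_function_def cardval_of_def by simp
qed

lemma cf_range_prepend_sum:
  assumes x: "pos_seq x" and x0: "0 < x 0"
  shows "cf_range (prepend_sum x) = insert (Fin 2) (cf_range x)"
proof -
  let ?s = "suminf x" and ?K = "achievement_set x"
  let ?f = "cardinal_function x" and ?g = "cardinal_function (prepend_sum x)"
  have s: "0 < ?s" by (rule pos_seq_suminf_pos[OF x x0])
  have K: "?K \<subseteq> {0..?s}" "0 \<in> ?K" "?s \<in> ?K"
    by (simp_all add: achievement_set_subset[OF x] zero_in_achievement_set suminf_in_achievement_set)
  have split: "?K \<union> (+) ?s ` ?K = (?K - {?s}) \<union> insert ?s ((+) ?s ` (?K - {0}))"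
  proof -
    have "(+) ?s ` ?K = insert ?s ((+) ?s ` (?K - {0}))"
      by (metis K(2) add.right_neutral image_insert insert_Diff)
    then show ?thesis using K(3) by blast
  qed
  have "?g ` (?K - {?s}) = ?f ` (?K - {?s})"
  proof (rule image_cong[OF refl])
    fix t assume "t \<in> ?K - {?s}"
    then have "t < ?s" using K(1) by fastforce
    then show "?g t = ?f t" by (rule cardinal_function_prepend_sum_less[OF x s])
  qed
  moreover have "?g ` (+) ?s ` (?K - {0}) = ?f ` (?K - {0})"
    unfolding image_image
  proof (rule image_cong[OF refl])
    fix u assume "u \<in> ?K - {0}"
    then have "0 < u" using K(1) by fastforce
    then show "?g (?s + u) = ?f u" by (rule cardinal_function_prepend_sum_greater[OF x s])
  qed
  moreover have "?g ?s = Fin 2" by (rule cardinal_function_prepend_sum_suminf[OF x s])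
  ultimately have "?g ` (?K \<union> (+) ?s ` ?K) = ?f ` (?K - {?s}) \<union> insert (Fin 2) (?f ` (?K - {0}))"
    unfolding split by (simp add: image_Un)
  also have "\<dots> = insert (Fin 2) (?f ` ?K)"
  proof -
    have "?K = (?K - {?s}) \<union> (?K - {0})" using s by auto
    then have f_split: "?f ` ?K = ?f ` (?K - {?s}) \<union> ?f ` (?K - {0})" by (metis image_Un)
    show ?thesis unfolding f_split by blast
  qed
  finally show ?thesis
    unfolding cf_range_def achievement_set_prepend_sum[OF x] .
qed

section \<open>Gluing two sets at a common extreme point\<close>

definition one_point_components :: "'a::topological_space set \<Rightarrow> 'a set" where
  "one_point_components S = {p \<in> S. connected_component_set S p = {p}}"

lemma cantorval_iff_one_point_components:
  "cantorval S \<longleftrightarrow> S \<noteq> {} \<and> compact S \<and> closure (interior S) = S \<and>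
    (\<forall>y\<in>S. \<forall>z\<in>connected_component_set S y. z \<noteq> y \<longrightarrow>
      Inf (connected_component_set S y) islimpt one_point_components S \<and>
      Sup (connected_component_set S y) islimpt one_point_components S)"
  unfolding cantorval_def one_point_components_def Let_def by blast

lemma connected_component_Un_separated:
  fixes K L :: "real set"
  assumes sep: "\<And>a b. a \<in> K \<Longrightarrow> b \<in> L \<Longrightarrow> s \<in> closed_segment a b"
    and s: "s \<in> K" and L_s: "connected_component_set L s = {s}" and y: "y \<in> K"
  shows "connected_component_set (K \<union> L) y = connected_component_set K y"
proof
  show "connected_component_set K y \<subseteq> connected_component_set (K \<union> L) y"
    by (rule connected_component_mono) blast
next
  define C where "C = connected_component_set (K \<union> L) y"
  have "convex C" unfolding C_def using connected_convex_1 by blast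
  have "C \<subseteq> K"
  proof
    fix z assume z: "z \<in> C"
    show "z \<in> K"
    proof (rule ccontr)
      assume "z \<notin> K"
      with z have zL: "z \<in> L" using connected_component_subset unfolding C_def by blast
      have "s \<in> closed_segment y z" using sep[OF y zL] .
      moreover have "y \<in> C" using y by (simp add: C_def)
      ultimately have seg_C: "closed_segment s z \<subseteq> C"
        using \<open>convex C\<close> z by (meson convex_contains_segment ends_in_segment(2) subset_closed_segment subset_trans)
      have "s \<in> L" using L_s by (metis connected_component_eq_empty insert_not_empty)
      have "w \<in> L" if w: "w \<in> closed_segment s z" for w
      proof (cases "w \<in> K")
        case True
        then have "s \<in> closed_segment w z" using sep zL by blast
        with w have "w = s" by (auto simp: closed_segment_eq_real_ivl split: if_splits)
        with \<open>s \<in> L\<close> show ?thesis by simp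
      next
        case False
        then show ?thesis using w seg_C connected_component_subset unfolding C_def by blast
      qed
      then have "closed_segment s z \<subseteq> connected_component_set L s"
        by (intro connected_component_maximal) auto
      then have "z = s" using L_s by auto
      with s \<open>z \<notin> K\<close> show False by simp
    qed
  qed
  then show "connected_component_set (K \<union> L) y \<subseteq> connected_component_set K y"
    unfolding C_def using y by (intro connected_component_maximal) auto
qed

lemma connected_component_Un_at_cut:
  fixes K L :: "real set"
  assumes KL: "K \<subseteq> {..s}" "L \<subseteq> {s..}"
    and K_s: "connected_component_set K s = {s}" and L_s: "connected_component_set L s = {s}"
  shows "y \<in> K \<Longrightarrow> connected_component_set (K \<union> L) y = connected_component_set K y"
    and "y \<in> L \<Longrightarrow> connected_component_set (K \<union> L) y = connected_component_set L y"
proof -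
  have "s \<in> K" "s \<in> L" using K_s L_s by (metis connected_component_eq_empty insert_not_empty)+
  have "s \<in> closed_segment a b \<and> s \<in> closed_segment b a" if "a \<in> K" "b \<in> L" for a b
    using that KL by (force simp: closed_segment_eq_real_ivl)
  then show "y \<in> K \<Longrightarrow> connected_component_set (K \<union> L) y = connected_component_set K y"
    and "y \<in> L \<Longrightarrow> connected_component_set (K \<union> L) y = connected_component_set L y"
    using connected_component_Un_separated[of K L s y] connected_component_Un_separated[of L K s y]
      \<open>s \<in> K\<close> \<open>s \<in> L\<close> K_s L_s by (simp_all add: Un_commute)
qed

text \<open>Otherwise the extreme point would end a nondegenerate component, and the one-point
  components accumulating at it would have to lie outside the set.\<close>

lemma cantorval_extreme_point_component:
  fixes S :: "real set"
  assumes cv: "cantorval S" and m: "m \<in> S" and extreme: "S \<subseteq> {..m} \<or> S \<subseteq> {m..}"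
  shows "connected_component_set S m = {m}"
proof (rule ccontr)
  define C where "C = connected_component_set S m"
  have "m \<in> C" "C \<subseteq> S" "convex C"
    using m connected_component_subset connected_convex_1 by (auto simp: C_def)
  assume "connected_component_set S m \<noteq> {m}"
  with \<open>m \<in> C\<close> obtain z where z: "z \<in> C" "z \<noteq> m" unfolding C_def by blast
  with cv m have lim: "Inf C islimpt one_point_components S" "Sup C islimpt one_point_components S"
    unfolding cantorval_iff_one_point_components C_def by blast+
  have "m islimpt one_point_components S"
    using extreme
  proof
    assume "S \<subseteq> {..m}"
    then have "Sup C = m" using \<open>m \<in> C\<close> \<open>C \<subseteq> S\<close> by (intro cSup_eq_maximum) auto
    with lim show ?thesis by simp
  next
    assume "S \<subseteq> {m..}"
    then have "Inf C = m" using \<open>m \<in> C\<close> \<open>C \<subseteq> S\<close> by (intro cInf_eq_minimum) auto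
    with lim show ?thesis by simp
  qed
  with z obtain p where p: "p \<in> one_point_components S" "p \<noteq> m" "dist p m < dist z m"
    unfolding islimpt_approachable by (metis zero_less_dist_iff)
  then have "p \<in> S" "connected_component_set S p = {p}"
    unfolding one_point_components_def by auto
  have "p \<in> closed_segment z m"
    using extreme \<open>p \<in> S\<close> z(1) \<open>C \<subseteq> S\<close> p(3)
    by (auto simp: closed_segment_eq_real_ivl dist_real_def)
  then have "p \<in> C"
    using \<open>convex C\<close> z(1) \<open>m \<in> C\<close> by (meson convex_contains_segment subsetD)
  then have "connected_component_set S p = C"
    unfolding C_def by (rule connected_component_eq)
  with \<open>connected_component_set S p = {p}\<close> z \<open>m \<in> C\<close> show False by auto
qed

lemma one_point_components_Un_at_cut:
  fixes K L :: "real set"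
  assumes "K \<subseteq> {..s}" "L \<subseteq> {s..}"
    and "connected_component_set K s = {s}" "connected_component_set L s = {s}"
  shows "one_point_components K \<subseteq> one_point_components (K \<union> L)"
    and "one_point_components L \<subseteq> one_point_components (K \<union> L)"
  using connected_component_Un_at_cut[OF assms] unfolding one_point_components_def
  by (simp_all add: subset_iff)

lemma cantor_set_Un:
  fixes K L :: "real set"
  assumes KL: "K \<subseteq> {..s}" "L \<subseteq> {s..}" "s \<in> K" "s \<in> L"
    and K: "cantor_set K" and L: "cantor_set L"
  shows "cantor_set (K \<union> L)"
proof -
  have "connected_component_set K s = {s}" "connected_component_set L s = {s}"
    using K L KL unfolding cantor_set_def by auto
  note components = connected_component_Un_at_cut[OF KL(1,2) this]
  show ?thesis
    using K L components unfolding cantor_set_def by (auto simp: compact_Un islimpt_Un)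
qed

lemma cantorval_Un:
  fixes K L :: "real set"
  assumes KL: "K \<subseteq> {..s}" "L \<subseteq> {s..}" "s \<in> K" "s \<in> L"
    and K: "cantorval K" and L: "cantorval L"
  shows "cantorval (K \<union> L)"
proof -
  have cut: "connected_component_set K s = {s}" "connected_component_set L s = {s}"
    using cantorval_extreme_point_component K L KL by blast+
  note components = connected_component_Un_at_cut[OF KL(1,2) cut]
  note one_point = one_point_components_Un_at_cut[OF KL(1,2) cut]
  have "closure (interior (K \<union> L)) = K \<union> L"
  proof
    show "closure (interior (K \<union> L)) \<subseteq> K \<union> L"
      using K L unfolding cantorval_def
      by (metis closure_closed closure_mono compact_imp_closed closed_Un interior_subset)
    show "K \<union> L \<subseteq> closure (interior (K \<union> L))"
      using K L unfolding cantorval_def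
      by (metis Un_least closure_mono interior_mono sup_ge1 sup_ge2)
  qed
  moreover have "Inf (connected_component_set (K \<union> L) y) islimpt one_point_components (K \<union> L) \<and>
      Sup (connected_component_set (K \<union> L) y) islimpt one_point_components (K \<union> L)"
    if "y \<in> K \<union> L" "z \<in> connected_component_set (K \<union> L) y" "z \<noteq> y" for y z
  proof (cases "y \<in> K")
    case True
    with that K have "Inf (connected_component_set K y) islimpt one_point_components K \<and>
        Sup (connected_component_set K y) islimpt one_point_components K"
      unfolding cantorval_iff_one_point_components components(1)[OF True] by blast
    then show ?thesis unfolding components(1)[OF True] by (meson islimpt_subset one_point(1))
  next
    case False
    with that have "y \<in> L" by blast
    with that L have "Inf (connected_component_set L y) islimpt one_point_components L \<and>
        Sup (connected_component_set L y) islimpt one_point_components L"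
      unfolding cantorval_iff_one_point_components components(2)[OF \<open>y \<in> L\<close>] by blast
    then show ?thesis unfolding components(2)[OF \<open>y \<in> L\<close>] by (meson islimpt_subset one_point(2))
  qed
  ultimately show ?thesis
    using K L unfolding cantorval_iff_one_point_components by (auto simp: compact_Un)
qed

lemma connected_component_translation:
  fixes S :: "'a::real_normed_vector set"
  assumes "y \<in> S"
  shows "connected_component_set ((+) c ` S) (c + y) = (+) c ` connected_component_set S y"
  using connected_component_set_homeomorphism[OF homeomorphism_symD[OF homeomorphism_translation] assms]
  by simp

lemma islimpt_translation:
  fixes y :: "'a::real_normed_vector"
  shows "y islimpt T \<Longrightarrow> c + y islimpt (+) c ` T"
  unfolding islimpt_approachable by (metis add_left_cancel dist_add_cancel image_eqI)

lemma one_point_components_translation: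
  fixes S :: "'a::real_normed_vector set"
  shows "one_point_components ((+) c ` S) = (+) c ` one_point_components S"
proof -
  have "connected_component_set ((+) c ` S) (c + q) = {c + q} \<longleftrightarrow> connected_component_set S q = {q}"
    if "q \<in> S" for q
    unfolding connected_component_translation[OF that]
    using inj_image_eq_iff[of "(+) c" _ "{q}"] by simp
  then show ?thesis unfolding one_point_components_def by auto
qed

lemma cantor_set_translation:
  fixes S :: "real set"
  shows "cantor_set S \<Longrightarrow> cantor_set ((+) c ` S)"
  unfolding cantor_set_def
  by (auto simp: compact_translation islimpt_translation connected_component_translation)

lemma cantorval_translation:
  fixes S :: "real set"
  assumes S: "cantorval S"
  shows "cantorval ((+) c ` S)"
proof -
  have "Inf (connected_component_set ((+) c ` S) y) islimpt one_point_components ((+) c ` S) \<and>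
      Sup (connected_component_set ((+) c ` S) y) islimpt one_point_components ((+) c ` S)"
    if y: "y \<in> (+) c ` S" and z: "z \<in> connected_component_set ((+) c ` S) y" "z \<noteq> y" for y z
  proof -
    obtain u where u: "u \<in> S" "y = c + u" using y by blast
    define C where "C = connected_component_set S u"
    have C: "connected_component_set ((+) c ` S) y = (+) c ` C"
      unfolding C_def u(2) by (rule connected_component_translation[OF u(1)])
    with z u obtain v where "v \<in> C" "v \<noteq> u" by auto
    with S u have lim: "Inf C islimpt one_point_components S" "Sup C islimpt one_point_components S"
      unfolding cantorval_iff_one_point_components C_def by blast+
    have "C \<noteq> {}" using \<open>v \<in> C\<close> by blast
    moreover have "bounded C"
      using S connected_component_subset unfolding cantorval_def C_def
      by (metis bounded_subset compact_imp_bounded)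
    ultimately have "Inf ((+) c ` C) = c + Inf C" "Sup ((+) c ` C) = c + Sup C"
      using Inf_add_eq[of "\<lambda>x. x" C c] Sup_add_eq[of "\<lambda>x. x" C c]
      by (simp_all add: bounded_imp_bdd_below bounded_imp_bdd_above)
    with lim show ?thesis
      unfolding C one_point_components_translation by (simp add: islimpt_translation)
  qed
  with S show ?thesis
    unfolding cantorval_iff_one_point_components
    by (simp add: compact_translation interior_translation closure_translation)
qed

lemma finite_union_intervals_Un:
  assumes "finite_union_intervals K" "finite_union_intervals L"
  shows "finite_union_intervals (K \<union> L)"
proof -
  obtain n :: nat and a b where ab: "\<forall>i<n. a i < b i" and K: "K = (\<Union>i<n. {a i..b i})"
    using assms(1) unfolding finite_union_intervals_def by blast
  obtain m :: nat and c d where cd: "\<forall>j<m. c j < d j" and L: "L = (\<Union>j<m. {c j..d j})"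
    using assms(2) unfolding finite_union_intervals_def by blast
  define a' where "a' i = (if i < n then a i else c (i - n))" for i
  define b' where "b' i = (if i < n then b i else d (i - n))" for i
  have "{..<m + n} = {..<n} \<union> {n..<m + n}" by auto
  then have "(\<Union>i<m + n. {a' i..b' i}) = (\<Union>i<n. {a' i..b' i}) \<union> (\<Union>j<m. {a' (j + n)..b' (j + n)})"
    by (simp add: UN_le_add_shift_strict[symmetric])
  also have "\<dots> = K \<union> L" by (simp add: K L a'_def b'_def)
  finally have "K \<union> L = (\<Union>i<m + n. {a' i..b' i})" ..
  moreover have "\<forall>i<m + n. a' i < b' i" using ab cd by (simp add: a'_def b'_def)
  ultimately show ?thesis unfolding finite_union_intervals_def by blast
qed

lemma finite_union_intervals_translation:
  assumes "finite_union_intervals K"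
  shows "finite_union_intervals ((+) c ` K)"
proof -
  obtain n :: nat and a b where ab: "\<forall>i<n. a i < b i" and K: "K = (\<Union>i<n. {a i..b i})"
    using assms unfolding finite_union_intervals_def by blast
  have "(+) c ` K = (\<Union>i<n. {a i + c..b i + c})"
    unfolding K image_UN by simp
  moreover have "\<forall>i<n. a i + c < b i + c" using ab by simp
  ultimately show ?thesis
    unfolding finite_union_intervals_def by (intro exI[of _ n] exI[of _ "\<lambda>i. a i + c"] exI[of _ "\<lambda>i. b i + c"]) simp
qed

lemma single_interval_imp_finite_union_intervals:
  "single_interval S \<Longrightarrow> finite_union_intervals S"
  unfolding single_interval_def finite_union_intervals_def
  by (elim exE conjE, intro exI[of _ 1] exI[of _ "\<lambda>_. a" for a] exI[of _ "\<lambda>_. b" for b]) auto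

lemma not_finite_union_intervals_singleton: "\<not> finite_union_intervals {t}"
proof
  assume "finite_union_intervals {t}"
  then obtain n :: nat and a b where ab: "\<forall>i<n. a i < b i" and t: "{t} = (\<Union>i<n. {a i..b i})"
    unfolding finite_union_intervals_def by blast
  then obtain i where "i < n" by (metis UN_empty lessThan_iff empty_not_insert equals0I)
  then have "{a i..b i} \<subseteq> {t}" "a i < b i" using ab t by auto
  then show False by (simp add: subset_singleton_iff)
qed

lemma not_cantor_set_singleton: "\<not> cantor_set {t}"
  unfolding cantor_set_def using islimpt_finite[of "{t}" t] by simp

lemma not_cantorval_singleton: "\<not> cantorval {t}"
  unfolding cantorval_def by simp

section \<open>The five families\<close>

lemma achievement_set_eq_0:
  assumes "pos_seq x" "x 0 \<le> 0"
  shows "achievement_set x = {0}"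
proof -
  have "subsum x A = 0" for A
    unfolding subsum_def using pos_seq_eq_0[OF assms] by (simp cong: if_cong)
  then show ?thesis unfolding achievement_set_eq_range by auto
qed

lemma first_term_pos_if_achievement_set:
  assumes "pos_seq x" "\<not> P {0}" "P (achievement_set x)"
  shows "0 < x 0"
  using assms achievement_set_eq_0 by (metis not_less)

lemma achievement_set_prepend_sum_cut:
  assumes x: "pos_seq x"
  defines "K \<equiv> achievement_set x" and "s \<equiv> suminf x"
  shows "K \<subseteq> {..s}" "(+) s ` K \<subseteq> {s..}" "s \<in> K" "s \<in> (+) s ` K"
  using achievement_set_subset[OF x] zero_in_achievement_set[of x] suminf_in_achievement_set[of x]
  by (force simp: K_def s_def)+

lemma single_interval_achievement_set:
  assumes x: "pos_seq x" and "single_interval (achievement_set x)"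
  shows "achievement_set x = {0..suminf x}"
proof -
  obtain a b where "a < b" and ab: "achievement_set x = {a..b}"
    using assms(2) unfolding single_interval_def by blast
  moreover have "a = 0" "b = suminf x"
    using ab achievement_set_subset[OF x] zero_in_achievement_set[of x] suminf_in_achievement_set[of x]
    by (auto intro: order.antisym)
  ultimately show ?thesis by simp
qed

lemma prepend_sum_finite_union_intervals:
  assumes "pos_seq x" "finite_union_intervals (achievement_set x)"
  shows "finite_union_intervals (achievement_set (prepend_sum x))"
  unfolding achievement_set_prepend_sum[OF assms(1)]
  using assms(2) by (intro finite_union_intervals_Un finite_union_intervals_translation)

lemma prepend_sum_single_interval:
  assumes x: "pos_seq x" and x0: "0 < x 0" and "single_interval (achievement_set x)"
  shows "single_interval (achievement_set (prepend_sum x))"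
proof -
  let ?s = "suminf x"
  have "achievement_set (prepend_sum x) = {0..?s} \<union> {?s..?s + ?s}"
    unfolding achievement_set_prepend_sum[OF x] single_interval_achievement_set[OF x assms(3)]
    by (simp add: add.commute)
  also have "\<dots> = {0..?s + ?s}" using pos_seq_suminf_pos[OF x x0] by auto
  finally show ?thesis
    unfolding single_interval_def using pos_seq_suminf_pos[OF x x0] by auto
qed

lemma prepend_sum_cantor_set:
  assumes x: "pos_seq x" and "cantor_set (achievement_set x)"
  shows "cantor_set (achievement_set (prepend_sum x))"
  unfolding achievement_set_prepend_sum[OF x]
  by (rule cantor_set_Un[OF achievement_set_prepend_sum_cut[OF x] assms(2) cantor_set_translation[OF assms(2)]])

lemma prepend_sum_cantorval:
  assumes x: "pos_seq x" and "cantorval (achievement_set x)"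
  shows "cantorval (achievement_set (prepend_sum x))"
  unfolding achievement_set_prepend_sum[OF x]
  by (rule cantorval_Un[OF achievement_set_prepend_sum_cut[OF x] assms(2) cantorval_translation[OF assms(2)]])

lemma prepend_sum_finite_support:
  assumes x: "pos_seq x" and x0: "0 < x 0" and "finite {n. x n \<noteq> 0}"
  shows "finite {n. prepend_sum x n \<noteq> 0}"
  using assms(3) by (simp add: support_prepend_sum[OF pos_seq_suminf_pos[OF x x0]])

definition unit_seq :: "nat \<Rightarrow> real" where
  "unit_seq n = (if n = 0 then 1 else 0)"

lemma unit_seq_admissible: "pos_seq unit_seq" "0 < unit_seq 0" "finite {n. unit_seq n \<noteq> 0}"
proof -
  have "summable unit_seq" unfolding unit_seq_def by (rule summable_finite[of "{0}"]) auto
  moreover have "\<forall>n. (n < 1 \<longrightarrow> 0 < unit_seq n) \<and> (1 \<le> n \<longrightarrow> unit_seq n = 0)"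
    by (simp add: unit_seq_def)
  ultimately show "pos_seq unit_seq" unfolding pos_seq_def by blast
  show "0 < unit_seq 0" "finite {n. unit_seq n \<noteq> 0}" by (simp_all add: unit_seq_def)
qed

lemma cf_range_eq_Fin_1:
  assumes x: "pos_seq x" and "achievement_set x \<subseteq> {0, suminf x}"
  shows "cf_range x = {Fin 1}"
proof -
  have "cardinal_function x t = Fin 1" if "t \<in> achievement_set x" for t
  proof -
    from that assms(2) have "t = 0 \<or> t = suminf x" by blast
    then show ?thesis
      by (elim disjE) (simp_all add: cardinal_function_0[OF x] cardinal_function_suminf[OF x])
  qed
  then show ?thesis unfolding cf_range_def using zero_in_achievement_set[of x] by force
qed

lemma cf_range_unit_seq: "cf_range unit_seq = {Fin 1}"
proof (rule cf_range_eq_Fin_1[OF unit_seq_admissible(1)])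
  have subsum: "subsum unit_seq A = (if 0 \<in> A then 1 else 0)" for A
    unfolding subsum_def by (subst suminf_finite[of "{0}"]) (auto simp: unit_seq_def)
  moreover have "suminf unit_seq = 1"
    using subsum[of UNIV] unfolding subsum_def by simp
  ultimately show "achievement_set unit_seq \<subseteq> {0, suminf unit_seq}"
    unfolding achievement_set_eq_range by auto
qed

lemma insert_Fin_2_cf_range_family:
  assumes prepend: "\<And>x. pos_seq x \<Longrightarrow> 0 < x 0 \<Longrightarrow> P x \<Longrightarrow> P (prepend_sum x)"
    and nonzero: "\<And>x. pos_seq x \<Longrightarrow> P x \<Longrightarrow> \<exists>y. pos_seq y \<and> 0 < y 0 \<and> P y \<and> cf_range y = cf_range x"
    and M: "M \<in> {cf_range x | x. pos_seq x \<and> P x}"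
  shows "insert (Fin 2) M \<in> {cf_range x | x. pos_seq x \<and> P x}"
proof -
  obtain x where "pos_seq x" "P x" "M = cf_range x" using M by blast
  with nonzero obtain y where y: "pos_seq y" "0 < y 0" "P y" "M = cf_range y" by metis
  then have "insert (Fin 2) M = cf_range (prepend_sum y)" by (simp add: cf_range_prepend_sum)
  with y prepend pos_seq_prepend_sum show ?thesis by blast
qed

lemma insert_Fin_2_achievement_set_family:
  assumes prepend: "\<And>x. pos_seq x \<Longrightarrow> 0 < x 0 \<Longrightarrow> P (achievement_set x) \<Longrightarrow>
      P (achievement_set (prepend_sum x))"
    and "\<not> P {0}"
    and "M \<in> {cf_range x | x. pos_seq x \<and> P (achievement_set x)}"
  shows "insert (Fin 2) M \<in> {cf_range x | x. pos_seq x \<and> P (achievement_set x)}"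
  using assms first_term_pos_if_achievement_set[of _ P] by (intro insert_Fin_2_cf_range_family) blast+

lemma fam_F_insert_Fin_2:
  assumes "M \<in> fam_F"
  shows "insert (Fin 2) M \<in> fam_F"
proof -
  have nonzero: "\<exists>y. pos_seq y \<and> 0 < y 0 \<and> finite {n. y n \<noteq> 0} \<and> cf_range y = cf_range x"
    if "pos_seq x" "finite {n. x n \<noteq> 0}" for x
  proof (cases "0 < x 0")
    case False
    then have "cf_range x = {Fin 1}"
      using that(1) by (intro cf_range_eq_Fin_1) (simp_all add: achievement_set_eq_0)
    then show ?thesis using unit_seq_admissible cf_range_unit_seq by metis
  qed (use that in blast)
  show ?thesis
    using insert_Fin_2_cf_range_family[OF prepend_sum_finite_support nonzero] assms
    unfolding fam_F_def finite_seq_def by blast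
qed

lemma fam_I_insert_Fin_2: "M \<in> fam_I \<Longrightarrow> insert (Fin 2) M \<in> fam_I"
  unfolding fam_I_def
  using prepend_sum_finite_union_intervals not_finite_union_intervals_singleton
  by (intro insert_Fin_2_achievement_set_family) blast+

lemma fam_I1_insert_Fin_2: "M \<in> fam_I1 \<Longrightarrow> insert (Fin 2) M \<in> fam_I1"
  unfolding fam_I1_def
  using prepend_sum_single_interval not_finite_union_intervals_singleton
    single_interval_imp_finite_union_intervals
  by (intro insert_Fin_2_achievement_set_family) blast+

lemma fam_C_insert_Fin_2: "M \<in> fam_C \<Longrightarrow> insert (Fin 2) M \<in> fam_C"
  unfolding fam_C_def
  using prepend_sum_cantor_set not_cantor_set_singleton
  by (intro insert_Fin_2_achievement_set_family) blast+

lemma fam_Cv_insert_Fin_2: "M \<in> fam_Cv \<Longrightarrow> insert (Fin 2) M \<in> fam_Cv"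
  unfolding fam_Cv_def
  using prepend_sum_cantorval not_cantorval_singleton
  by (intro insert_Fin_2_achievement_set_family) blast+

theorem lemma2p3:
  assumes "J \<in> {fam_F, fam_I, fam_I1, fam_C, fam_Cv}"
    and "M \<in> J"
  shows "insert (Fin 2) M \<in> J"
  using assms fam_F_insert_Fin_2 fam_I_insert_Fin_2 fam_I1_insert_Fin_2 fam_C_insert_Fin_2
    fam_Cv_insert_Fin_2
  by blast

end
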